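(* Let $d$ be a premetric on a topological space $X$. Then (1) the regularization $\overline d$ is a premetric with closed balls on $X$; (2) if $d$ has open balls, then the semiregularization $\overline d^\circ$ is a premetric with open balls on $X$.
   Context: A premetric on $X$ is $d:X\times X\to[0,\infty)$ with $d(x,x)=0$. $B_d(x,\varepsilon)=\{y:d(x,y)<\varepsilon\}$; $d$ has open balls if every $B_d(x,\varepsilon)$ is open, closed balls if every $\{y:d(x,y)\le\varepsilon\}$ is closed. The regularization is $\overline d(x,y)=\inf\{\varepsilon>0:y\in\overline{B_d(x,\varepsilon)}\}$ and the semiregularization is $\overline d^\circ(x,y)=\inf\{\varepsilon>0:y\in B_d(x,\varepsilon)\cup\mathrm{int}\,\overline{B_d(x,\varepsilon)}\}$. *)

theory Defs
  imports "HOL-Analysis.Analysis"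
begin

definition premetric :: "'a topology \<Rightarrow> ('a \<Rightarrow> 'a \<Rightarrow> real) \<Rightarrow> bool" where
  "premetric T d \<longleftrightarrow> (\<forall>x\<in>topspace T. \<forall>y\<in>topspace T. d x y \<ge> 0) \<and> (\<forall>x\<in>topspace T. d x x = 0)"

definition pball :: "'a topology \<Rightarrow> ('a \<Rightarrow> 'a \<Rightarrow> real) \<Rightarrow> 'a \<Rightarrow> real \<Rightarrow> 'a set" where
  "pball T d x e = {y \<in> topspace T. d x y < e}"

definition pcball :: "'a topology \<Rightarrow> ('a \<Rightarrow> 'a \<Rightarrow> real) \<Rightarrow> 'a \<Rightarrow> real \<Rightarrow> 'a set" where
  "pcball T d x e = {y \<in> topspace T. d x y \<le> e}"

definition has_open_balls :: "'a topology \<Rightarrow> ('a \<Rightarrow> 'a \<Rightarrow> real) \<Rightarrow> bool" where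
  "has_open_balls T d \<longleftrightarrow> (\<forall>x\<in>topspace T. \<forall>e. openin T (pball T d x e))"

definition has_closed_balls :: "'a topology \<Rightarrow> ('a \<Rightarrow> 'a \<Rightarrow> real) \<Rightarrow> bool" where
  "has_closed_balls T d \<longleftrightarrow> (\<forall>x\<in>topspace T. \<forall>e. closedin T (pcball T d x e))"

definition regularization :: "'a topology \<Rightarrow> ('a \<Rightarrow> 'a \<Rightarrow> real) \<Rightarrow> 'a \<Rightarrow> 'a \<Rightarrow> real" where
  "regularization T d x y = Inf {e. e > 0 \<and> y \<in> T closure_of (pball T d x e)}"

definition semiregularization :: "'a topology \<Rightarrow> ('a \<Rightarrow> 'a \<Rightarrow> real) \<Rightarrow> 'a \<Rightarrow> 'a \<Rightarrow> real" where
  "semiregularization T d x y =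
     Inf {e. e > 0 \<and> y \<in> pball T d x e \<union> T interior_of (T closure_of (pball T d x e))}"

end

theory Submission
  imports Defs
begin

text \<open>Both regularizations are instances of one construction: the infimal radius
  \<open>inf {e > 0. y \<in> A e}\<close> of a family of sets \<open>A e\<close> growing with \<open>e\<close>. Its strict
  sublevel set below \<open>r\<close> is the union of the \<open>A e\<close> with \<open>0 < e < r\<close> and, for a monotone
  family, its sublevel set at \<open>r\<close> is the intersection of the \<open>A e\<close> with \<open>e > r\<close>. For the
  regularization the \<open>A e\<close> are closures of balls, so closed balls are intersections of closed
  sets; for the semiregularization the \<open>A e\<close> are open as soon as the balls of \<open>d\<close> are, so open
  balls are unions of open sets.\<close>

definition inf_radius :: "(real \<Rightarrow> 'a set) \<Rightarrow> 'a \<Rightarrow> real" where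
  "inf_radius A y = Inf {e. e > 0 \<and> y \<in> A e}"

text \<open>At points lying in no \<open>A e\<close> the value is the unspecified \<open>Inf {}\<close>; hence the
  covering hypotheses \<open>\<exists>e>0. y \<in> A e\<close> below.\<close>

lemma inf_radius_less_iff:
  assumes "\<exists>e>0. y \<in> A e"
  shows "inf_radius A y < r \<longleftrightarrow> (\<exists>e. 0 < e \<and> e < r \<and> y \<in> A e)"
proof -
  let ?S = "{e. e > 0 \<and> y \<in> A e}"
  have "?S \<noteq> {}" "bdd_below ?S"
    using assms by (auto intro: bdd_belowI[of _ 0])
  then show ?thesis
    unfolding inf_radius_def by (auto simp: cInf_less_iff)
qed

lemma inf_radius_nonneg:
  assumes "\<exists>e>0. y \<in> A e"
  shows "0 \<le> inf_radius A y"
  using assms unfolding inf_radius_def by (intro cInf_greatest) auto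

lemma inf_radius_eq_0:
  assumes "\<And>e. e > 0 \<Longrightarrow> y \<in> A e"
  shows "inf_radius A y = 0"
proof -
  have ex: "\<exists>e>0. y \<in> A e"
    using assms[of 1] zero_less_one by blast
  have "inf_radius A y < e" if "e > 0" for e
    using inf_radius_less_iff[OF ex] assms that by (auto intro!: exI[of _ "e / 2"])
  then have "inf_radius A y \<le> 0"
    by (meson not_le order_less_irrefl)
  with inf_radius_nonneg[OF ex] show ?thesis by simp
qed

lemma inf_radius_sublevel_less:
  assumes "\<And>e. A e \<subseteq> X" and "\<And>y. y \<in> X \<Longrightarrow> \<exists>e>0. y \<in> A e"
  shows "{y \<in> X. inf_radius A y < r} = (\<Union>e\<in>{0<..<r}. A e)"
  using assms inf_radius_less_iff[of _ A r] by fastforce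

lemma inf_radius_sublevel_le:
  assumes sub: "\<And>e. A e \<subseteq> X" and cover: "\<And>y. y \<in> X \<Longrightarrow> \<exists>e>0. y \<in> A e"
    and mono: "\<And>e e'. 0 < e \<Longrightarrow> e \<le> e' \<Longrightarrow> A e \<subseteq> A e'" and "0 \<le> r"
  shows "{y \<in> X. inf_radius A y \<le> r} = (\<Inter>e\<in>{r<..}. A e)"
proof (intro set_eqI iffI)
  fix y assume "y \<in> {y \<in> X. inf_radius A y \<le> r}"
  then have y: "y \<in> X" "inf_radius A y \<le> r" by auto
  show "y \<in> (\<Inter>e\<in>{r<..}. A e)"
  proof
    fix e assume "e \<in> {r<..}"
    with y(2) have "inf_radius A y < e" by simp
    then obtain e0 where "0 < e0" "e0 < e" "y \<in> A e0"
      using inf_radius_less_iff[OF cover[OF y(1)]] by blast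
    then show "y \<in> A e"
      using mono[of e0 e] by (auto dest: subsetD)
  qed
next
  fix y assume y: "y \<in> (\<Inter>e\<in>{r<..}. A e)"
  then have "y \<in> A (r + 1)" by simp
  moreover have "0 < r + 1"
    using \<open>0 \<le> r\<close> by linarith
  ultimately have ex: "\<exists>e>0. y \<in> A e" and "y \<in> X"
    using sub[of "r + 1"] by blast+
  have less: "inf_radius A y < e" if "r < e" for e
  proof -
    have "0 < (r + e) / 2" "(r + e) / 2 < e" "y \<in> A ((r + e) / 2)"
      using y \<open>0 \<le> r\<close> that by auto
    then show ?thesis
      unfolding inf_radius_less_iff[OF ex] by blast
  qed
  have "inf_radius A y \<le> r"
  proof (rule dense_ge)
    show "inf_radius A y \<le> e" if "r < e" for e
      using less[OF that] by simp
  qed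
  with \<open>y \<in> X\<close> show "y \<in> {y \<in> X. inf_radius A y \<le> r}" by simp
qed

lemma pball_subset_topspace: "pball T d x e \<subseteq> topspace T"
  unfolding pball_def by auto

lemma pball_mono: "e \<le> e' \<Longrightarrow> pball T d x e \<subseteq> pball T d x e'"
  unfolding pball_def by auto

lemma in_some_pball: "y \<in> topspace T \<Longrightarrow> \<exists>e>0. y \<in> pball T d x e"
  unfolding pball_def by (intro exI[of _ "max (d x y) 0 + 1"]) auto

lemma centre_in_pball: "premetric T d \<Longrightarrow> x \<in> topspace T \<Longrightarrow> e > 0 \<Longrightarrow> x \<in> pball T d x e"
  unfolding premetric_def pball_def by auto

lemma regularization_eq_inf_radius:
  "regularization T d x = inf_radius (\<lambda>e. T closure_of pball T d x e)"
  unfolding regularization_def inf_radius_def by (rule ext) (rule refl)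

lemma semiregularization_eq_inf_radius:
  "semiregularization T d x =
     inf_radius (\<lambda>e. pball T d x e \<union> T interior_of (T closure_of pball T d x e))"
  unfolding semiregularization_def inf_radius_def by (rule ext) (rule refl)

lemma pball_subset_closure: "pball T d x e \<subseteq> T closure_of pball T d x e"
  by (rule closure_of_subset[OF pball_subset_topspace])

lemma in_some_closure_pball: "y \<in> topspace T \<Longrightarrow> \<exists>e>0. y \<in> T closure_of pball T d x e"
  using in_some_pball[of y T d x] pball_subset_closure[of T d x] by blast

lemma premetric_regularization:
  assumes "premetric T d"
  shows "premetric T (regularization T d)"
  unfolding premetric_def regularization_eq_inf_radius
proof (intro conjI ballI)
  fix x y assume "y \<in> topspace T"
  then show "0 \<le> inf_radius (\<lambda>e. T closure_of pball T d x e) y"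
    by (intro inf_radius_nonneg in_some_closure_pball)
next
  fix x assume x: "x \<in> topspace T"
  show "inf_radius (\<lambda>e. T closure_of pball T d x e) x = 0"
    using subsetD[OF pball_subset_closure centre_in_pball[OF assms x]] by (rule inf_radius_eq_0)
qed

lemma has_closed_balls_regularization: "has_closed_balls T (regularization T d)"
  unfolding has_closed_balls_def
proof (intro ballI allI)
  fix x e
  let ?A = "\<lambda>e. T closure_of pball T d x e"
  have ball_eq: "pcball T (regularization T d) x e = {y \<in> topspace T. inf_radius ?A y \<le> e}"
    unfolding pcball_def regularization_eq_inf_radius ..
  show "closedin T (pcball T (regularization T d) x e)"
  proof (cases "0 \<le> e")
    case True
    have "{y \<in> topspace T. inf_radius ?A y \<le> e} = (\<Inter>e'\<in>{e<..}. ?A e')"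
    proof (rule inf_radius_sublevel_le)
      show "?A e' \<subseteq> ?A e''" if "e' \<le> e''" for e' e''
        using that by (intro closure_of_mono pball_mono)
      show "?A e' \<subseteq> topspace T" for e'
        by (rule closure_of_subset_topspace)
    qed (use in_some_closure_pball True in simp_all)
    moreover have "closedin T (\<Inter>e'\<in>{e<..}. ?A e')"
      by (intro closedin_INT closedin_closure_of) auto
    ultimately show ?thesis
      unfolding ball_eq by simp
  next
    case False
    have "\<not> inf_radius ?A y \<le> e" if "y \<in> topspace T" for y
      using inf_radius_nonneg[OF in_some_closure_pball[of y T d x]] that False by linarith
    then have "{y \<in> topspace T. inf_radius ?A y \<le> e} = {}"
      by blast
    then show ?thesis
      unfolding ball_eq by (metis closedin_empty)
  qed
qed

lemma premetric_semiregularization: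
  assumes "premetric T d"
  shows "premetric T (semiregularization T d)"
  unfolding premetric_def semiregularization_eq_inf_radius
proof (intro conjI ballI)
  fix x y assume "y \<in> topspace T"
  then show "0 \<le> inf_radius (\<lambda>e. pball T d x e \<union> T interior_of (T closure_of pball T d x e)) y"
    using in_some_pball[of y T d x] by (intro inf_radius_nonneg) blast
next
  fix x assume x: "x \<in> topspace T"
  show "inf_radius (\<lambda>e. pball T d x e \<union> T interior_of (T closure_of pball T d x e)) x = 0"
    using centre_in_pball[OF assms x] by (intro inf_radius_eq_0) blast
qed

lemma has_open_balls_semiregularization:
  assumes "has_open_balls T d"
  shows "has_open_balls T (semiregularization T d)"
  unfolding has_open_balls_def
proof (intro ballI allI)
  fix x e assume x: "x \<in> topspace T"
  let ?A = "\<lambda>e. pball T d x e \<union> T interior_of (T closure_of pball T d x e)"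
  have "pball T (semiregularization T d) x e = {y \<in> topspace T. inf_radius ?A y < e}"
    unfolding pball_def[of T "semiregularization T d"] semiregularization_eq_inf_radius ..
  also have "\<dots> = (\<Union>e'\<in>{0<..<e}. ?A e')"
  proof (rule inf_radius_sublevel_less)
    show "?A e' \<subseteq> topspace T" for e'
      using pball_subset_topspace interior_of_subset_topspace by (rule Un_least)
    show "\<exists>e'>0. y \<in> ?A e'" if "y \<in> topspace T" for y
      using in_some_pball[OF that, of d x] by blast
  qed
  finally have ball_eq: "pball T (semiregularization T d) x e = (\<Union>e'\<in>{0<..<e}. ?A e')" .
  have "openin T (?A e')" for e'
    using assms x unfolding has_open_balls_def by (intro openin_Un openin_interior_of) auto
  then show "openin T (pball T (semiregularization T d) x e)"
    unfolding ball_eq by (intro openin_Union) auto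
qed

theorem proposition1p4:
  fixes T :: "'a topology" and d :: "'a \<Rightarrow> 'a \<Rightarrow> real"
  assumes "premetric T d"
  shows "(premetric T (regularization T d) \<and> has_closed_balls T (regularization T d)) \<and>
         (has_open_balls T d \<longrightarrow>
           premetric T (semiregularization T d) \<and> has_open_balls T (semiregularization T d))"
  using assms premetric_regularization has_closed_balls_regularization
    premetric_semiregularization has_open_balls_semiregularization
  by blast

end
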